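(* Suppose that $\int_{[0,1]} |\log(1-p)|\,\Lambda(dp)<\infty$. Then the sequence $(L_n)_{n\ge 1}$ is tight.
   Context: Let $\Lambda$ be a nonzero finite measure on $[0,1]$. For $n\ge 1$, the $\Lambda$-coalescent started with $n$ blocks, $(\Pi_n(t))_{t\ge0}$, is the continuous-time Markov chain on partitions of $\{1,\dots,n\}$, started from the partition into singletons, in which, whenever there are $b$ blocks, each particular collection of $k\ge2$ blocks merges into a single block at rate $\lambda_{b,k}=\int_{[0,1]}p^{k-2}(1-p)^{b-k}\,\Lambda(dp)$, and no other transitions occur. Let $N_n(t)$ be the number of blocks of $\Pi_n(t)$, $T_n=\inf\{t\ge0:N_n(t)=1\}$ the time of the last merger, and $L_n=N_n(T_n-)$ the number of blocks involved in the last merger. *)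

theory Defs
  imports "HOL-Probability.Probability"
begin

text \<open>Lambda-coalescent: merger rate of a particular collection of k blocks when
  there are b blocks.\<close>
definition lambda_rate :: "real measure \<Rightarrow> nat \<Rightarrow> nat \<Rightarrow> real" where
  "lambda_rate \<Lambda> b k = (LINT p:{0..1}|\<Lambda>. p ^ (k - 2) * (1 - p) ^ (b - k))"

definition total_rate :: "real measure \<Rightarrow> nat \<Rightarrow> real" where
  "total_rate \<Lambda> b = (\<Sum>k\<in>{2..b}. real (b choose k) * lambda_rate \<Lambda> b k)"

text \<open>Embedded jump chain: from partition P (a set of blocks), the collection S of
  blocks that merges at the next jump is chosen with probability proportional to its rate.\<close>
definition merge_choice :: "real measure \<Rightarrow> nat set set \<Rightarrow> nat set set pmf" where
  "merge_choice \<Lambda> P = embed_pmf (\<lambda>S. if S \<subseteq> P \<and> 2 \<le> card S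
      then lambda_rate \<Lambda> (card P) (card S) / total_rate \<Lambda> (card P) else 0)"

text \<open>Law of the number of blocks involved in the last merger, for the coalescent
  started from partition P (fuel = number of remaining jumps allowed; card P suffices).\<close>
fun last_merger_aux :: "real measure \<Rightarrow> nat \<Rightarrow> nat set set \<Rightarrow> nat pmf" where
  "last_merger_aux \<Lambda> 0 P = return_pmf (card P)"
| "last_merger_aux \<Lambda> (Suc f) P =
     (if card P \<le> 1 then return_pmf (card P)
      else bind_pmf (merge_choice \<Lambda> P)
             (\<lambda>S. if S = P then return_pmf (card P)
                  else last_merger_aux \<Lambda> f ((P - S) \<union> {\<Union>S})))"

definition L_law :: "real measure \<Rightarrow> nat \<Rightarrow> nat pmf" where
  "L_law \<Lambda> n = last_merger_aux \<Lambda> n {{i} | i. i \<in> {1..n}}"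

end

(*
  Write c = Lambda([0,1]) and a_k = 2 lambda_{k,k} / ((k - 1) c) for k >= 2.  With b blocks the
  number of blocks decreases at rate sum_k C(b,k) (k - 1) lambda_{b,k} >= (b - 1) c, since
  C(b,k) (k - 1) >= (b - 1) C(b-2,k-2) and the weights C(b-2,k-2) p^(k-2) (1-p)^(b-k) sum to 1.
  Hence F_K(b) = sum_{K<k<=b} a_k bounds P(L > 2K) when starting from b blocks, by induction
  along the jump chain: if the first merger involves k < b blocks, F_K drops by at least
  (k - 1) a_b / 2 (the a_k decrease and 2K < b), and the normalisation of a_b makes this
  expected drop pay exactly for the probability lambda_{b,b} / lambda_b that all b blocks merge
  at once.  Finally sum_k a_k = (2/c) int sum_j p^j/(j+1) Lambda(dp)
  <= (2/c) int (1 + |log(1-p)|) Lambda(dp) < oo, so F_K(b) <= sum_{k>K} a_k is small uniformly in b.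
*)
theory Submission
  imports Defs
begin

lemma binomial_times_pred_ge:
  assumes "2 \<le> k" "k \<le> b"
  shows "real (b - 1) * real (b - 2 choose (k - 2)) \<le> real (b choose k) * (real k - 1)"
proof -
  obtain j m where k: "k = Suc (Suc j)" and b: "b = Suc (Suc m)"
    using assms by (metis add_2_eq_Suc le_Suc_ex order_trans)
  have "k * ((b choose k) * (k - 1)) = Suc j * (Suc (Suc j) * (b choose k))"
    unfolding k by (simp add: algebra_simps)
  also have "Suc (Suc j) * (b choose k) = b * (Suc m choose Suc j)"
    unfolding k b by (rule Suc_times_binomial)
  also have "Suc j * (b * (Suc m choose Suc j)) = b * (Suc j * (Suc m choose Suc j))"
    by (rule mult.left_commute)
  also have "Suc j * (Suc m choose Suc j) = Suc m * (m choose j)"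
    by (rule Suc_times_binomial)
  also have "b * (Suc m * (m choose j)) = b * ((b - 1) * (b - 2 choose (k - 2)))"
    using b k by simp
  finally have "real (k * ((b choose k) * (k - 1))) = real (b * ((b - 1) * (b - 2 choose (k - 2))))"
    by (simp only:)
  then have "real k * (real (b choose k) * (real k - 1))
      = real b * (real (b - 1) * real (b - 2 choose (k - 2)))"
    using assms by (simp add: of_nat_diff)
  also have "\<dots> \<ge> real k * (real (b - 1) * real (b - 2 choose (k - 2)))"
    using assms by (intro mult_right_mono) auto
  finally show ?thesis using assms by simp
qed

lemma sum_binomial_times_pred_ge:
  fixes p :: real
  assumes "0 \<le> p" "p \<le> 1" "2 \<le> b"
  shows "real b - 1 \<le> (\<Sum>k=2..b. real (b choose k) * (real k - 1) * (p ^ (k - 2) * (1 - p) ^ (b - k)))"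
proof -
  obtain m where b: "b = m + 2"
    using assms(3) le_Suc_ex by (metis add.commute)
  have "(\<Sum>k=2..b. real (b - 2 choose (k - 2)) * (p ^ (k - 2) * (1 - p) ^ (b - k)))
      = (\<Sum>j=0..m. real (m choose j) * p ^ j * (1 - p) ^ (m - j))"
    unfolding b by (rule sum.reindex_bij_witness[of _ "\<lambda>j. j + 2" "\<lambda>k. k - 2"])
      (auto simp: Suc_diff_le)
  also have "\<dots> = 1"
    using binomial_ring[of p "1 - p" m] by (simp add: atLeast0AtMost)
  finally have one: "(\<Sum>k=2..b. real (b - 2 choose (k - 2)) * (p ^ (k - 2) * (1 - p) ^ (b - k))) = 1" .
  have "real b - 1 = real (b - 1) * (\<Sum>k=2..b. real (b - 2 choose (k - 2)) * (p ^ (k - 2) * (1 - p) ^ (b - k)))"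
    using assms(3) by (simp add: one of_nat_diff)
  also have "\<dots> \<le> (\<Sum>k=2..b. real (b choose k) * (real k - 1) * (p ^ (k - 2) * (1 - p) ^ (b - k)))"
    unfolding sum_distrib_left mult.assoc[symmetric]
    using assms by (intro sum_mono mult_right_mono binomial_times_pred_ge) auto
  finally show ?thesis .
qed

lemma sum_subsets_by_card:
  fixes g :: "nat \<Rightarrow> 'a::comm_semiring_1"
  assumes "finite P"
  shows "(\<Sum>S | S \<subseteq> P \<and> m \<le> card S. g (card S)) = (\<Sum>k=m..card P. of_nat (card P choose k) * g k)"
proof -
  have by_card: "{S. S \<subseteq> P \<and> m \<le> card S} = (\<Union>k\<in>{m..card P}. {S. S \<subseteq> P \<and> card S = k})"
    using assms by (auto intro: card_mono)
  have "(\<Sum>S | S \<subseteq> P \<and> m \<le> card S. g (card S))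
      = (\<Sum>k=m..card P. \<Sum>S | S \<subseteq> P \<and> card S = k. g (card S))"
    unfolding by_card by (rule sum.UNION_disjoint) (use assms in auto)
  also have "\<dots> = (\<Sum>k=m..card P. of_nat (card P choose k) * g k)"
    using n_subsets[OF assms] by (intro sum.cong) auto
  finally show ?thesis .
qed

lemma card_merge_blocks_le:
  assumes "finite P" "S \<subseteq> P"
  shows "card ((P - S) \<union> {\<Union>S}) \<le> card P - card S + 1"
proof -
  have "card ((P - S) \<union> {\<Union>S}) \<le> Suc (card (P - S))"
    using assms by (simp add: card_insert_if)
  also have "card (P - S) = card P - card S"
    using assms by (simp add: card_Diff_subset finite_subset)
  finally show ?thesis by simp
qed

lemma measure_bind_pmf_finite:
  assumes "finite A" "set_pmf M \<subseteq> A"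
  shows "measure_pmf.prob (bind_pmf M N) X = (\<Sum>x\<in>A. pmf M x * measure_pmf.prob (N x) X)"
proof -
  have "measure_pmf.prob (bind_pmf M N) X = (\<integral>x. measure_pmf.prob (N x) X \<partial>M)"
    unfolding measure_pmf_bind
    by (rule measure_pmf.measure_bind[where N = "count_space UNIV"])
       (auto simp: measure_pmf_in_subprob_algebra)
  also have "\<dots> = (\<Sum>x\<in>A. measure_pmf.prob (N x) X * pmf M x)"
    using assms by (intro integral_measure_pmf_real) auto
  finally show ?thesis by (simp add: mult.commute)
qed

lemma sum_power_div_Suc_le:
  fixes p :: real
  assumes "0 \<le> p" "p < 1"
  shows "(\<Sum>j\<le>n. p ^ j / real (Suc j)) \<le> 1 - ln (1 - p)"
proof -
  have "(\<lambda>j. - (- (p ^ j) / real j)) sums - ln (1 + - p)"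
    using ln_series'[of "- p"] assms by (intro sums_minus) simp
  then have log_sums: "(\<lambda>j. p ^ j / real j) sums - ln (1 - p)"
    by simp
  \<comment> \<open>the \<open>j = 0\<close> term of the logarithmic series is \<open>p ^ 0 / 0 = 0\<close>\<close>
  have "(\<Sum>j\<le>n. p ^ j / real (Suc j)) \<le> (\<Sum>j\<le>n. (if j = 0 then 1 else 0) + p ^ j / real j)"
  proof (rule sum_mono)
    fix j :: nat
    have "p ^ j / real (Suc j) \<le> p ^ j / real j" if "j > 0"
      using assms that by (intro divide_left_mono) auto
    then show "p ^ j / real (Suc j) \<le> (if j = 0 then 1 else 0) + p ^ j / real j"
      by (cases "j = 0") auto
  qed
  also have "\<dots> = 1 + (\<Sum>j\<le>n. p ^ j / real j)"
    by (simp add: sum.distrib)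
  also have "(\<Sum>j\<le>n. p ^ j / real j) \<le> - ln (1 - p)"
    using log_sums assms sum_le_suminf[of "\<lambda>j. p ^ j / real j" "{..n}"] by (simp add: sums_iff)
  finally show ?thesis by simp
qed

locale finite_borel_measure = finite_measure \<Lambda> for \<Lambda> :: "real measure" +
  assumes sets_eq_borel: "sets \<Lambda> = sets borel"
begin

lemma integrable_indicator_bounded:
  fixes f :: "real \<Rightarrow> real"
  assumes [measurable]: "f \<in> borel_measurable borel"
    and bound: "\<And>p. p \<in> {0..1} \<Longrightarrow> \<bar>f p\<bar> \<le> B"
  shows "integrable \<Lambda> (\<lambda>p. indicator {0..1} p * f p)"
proof (rule integrable_const_bound[where B = "\<bar>B\<bar>"])
  show "AE p in \<Lambda>. norm (indicator {0..1} p * f p) \<le> \<bar>B\<bar>"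
    using bound by (intro AE_I2) (auto simp: indicator_def intro: order_trans[OF _ abs_ge_self])
  show "(\<lambda>p. indicator {0..1} p * f p) \<in> borel_measurable \<Lambda>"
    unfolding measurable_cong_sets[OF sets_eq_borel refl] by measurable
qed

lemma integrable_rate_integrand:
  "integrable \<Lambda> (\<lambda>p. indicator {0..1} p * (p ^ i * (1 - p) ^ j))"
proof (rule integrable_indicator_bounded[where B = 1])
  show "(\<lambda>p::real. p ^ i * (1 - p) ^ j) \<in> borel_measurable borel"
    by measurable
qed (auto simp: abs_mult intro!: mult_le_one power_le_one)

lemma lambda_rate_eq_integral:
  "lambda_rate \<Lambda> b k = (\<integral>p. indicator {0..1} p * (p ^ (k - 2) * (1 - p) ^ (b - k)) \<partial>\<Lambda>)"
  unfolding lambda_rate_def set_lebesgue_integral_def by simp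

lemma lambda_rate_nonneg: "0 \<le> lambda_rate \<Lambda> b k"
  unfolding lambda_rate_eq_integral
  by (intro integral_nonneg_AE AE_I2) (auto simp: indicator_def)

lemma lambda_rate_diag_antimono:
  assumes "2 \<le> j" "j \<le> b"
  shows "lambda_rate \<Lambda> b b \<le> lambda_rate \<Lambda> j j"
  unfolding lambda_rate_eq_integral
  using assms by (intro integral_mono integrable_rate_integrand)
    (auto simp: indicator_def intro!: power_decreasing)

lemma block_loss_rate_ge:
  assumes "2 \<le> b"
  shows "(real b - 1) * measure \<Lambda> {0..1}
    \<le> (\<Sum>k=2..b. real (b choose k) * (real k - 1) * lambda_rate \<Lambda> b k)"
proof -
  define g where "g p = (\<Sum>k=2..b. real (b choose k) * (real k - 1) * (p ^ (k - 2) * (1 - p) ^ (b - k)))"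
    for p :: real
  have g_sum: "indicator {0..1} p * g p = (\<Sum>k=2..b. real (b choose k) * (real k - 1) *
      (indicator {0..1} p * (p ^ (k - 2) * (1 - p) ^ (b - k))))" for p :: real
    unfolding g_def sum_distrib_left by (simp add: ac_simps)
  have integrable_g: "integrable \<Lambda> (\<lambda>p. indicator {0..1} p * g p)"
    unfolding g_sum by (intro Bochner_Integration.integrable_sum integrable_mult_right integrable_rate_integrand)
  have "(real b - 1) * measure \<Lambda> {0..1} = (\<integral>p. indicator {0..1} p * (real b - 1) \<partial>\<Lambda>)"
    using sets_eq_borel by (simp add: emeasure_eq_measure)
  also have "\<dots> \<le> (\<integral>p. indicator {0..1} p * g p \<partial>\<Lambda>)"
  proof (rule integral_mono[OF _ integrable_g])
    show "integrable \<Lambda> (\<lambda>p. indicator {0..1} p * (real b - 1))"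
      by (rule integrable_indicator_bounded[where B = "real b"]) (use assms in auto)
    show "indicator {0..1} p * (real b - 1) \<le> indicator {0..1} p * g p" for p :: real
      unfolding g_def using sum_binomial_times_pred_ge[of p b] assms by (auto simp: indicator_def)
  qed
  also have "\<dots> = (\<Sum>k=2..b. real (b choose k) * (real k - 1) * lambda_rate \<Lambda> b k)"
    unfolding g_sum lambda_rate_eq_integral
    by (subst Bochner_Integration.integral_sum) (auto intro!: integrable_mult_right integrable_rate_integrand)
  finally show ?thesis .
qed

lemma total_rate_ge_mass:
  assumes "2 \<le> b"
  shows "measure \<Lambda> {0..1} \<le> total_rate \<Lambda> b"
proof -
  have "(real b - 1) * measure \<Lambda> {0..1}
      \<le> (\<Sum>k=2..b. real (b choose k) * (real k - 1) * lambda_rate \<Lambda> b k)"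
    using block_loss_rate_ge[OF assms] .
  also have "\<dots> \<le> (\<Sum>k=2..b. (real b - 1) * (real (b choose k) * lambda_rate \<Lambda> b k))"
    by (intro sum_mono) (auto simp: algebra_simps intro!: mult_right_mono mult_nonneg_nonneg lambda_rate_nonneg)
  also have "\<dots> = (real b - 1) * total_rate \<Lambda> b"
    unfolding total_rate_def sum_distrib_left ..
  finally show ?thesis using assms by simp
qed

end

locale Lambda_coalescent = finite_borel_measure +
  assumes mass_pos: "0 < measure \<Lambda> {0..1}"
begin

lemma total_rate_pos: "2 \<le> b \<Longrightarrow> 0 < total_rate \<Lambda> b"
  using total_rate_ge_mass mass_pos by fastforce

lemma pmf_merge_choice:
  assumes "finite P" "2 \<le> card P"
  shows "pmf (merge_choice \<Lambda> P) S = (if S \<subseteq> P \<and> 2 \<le> card S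
    then lambda_rate \<Lambda> (card P) (card S) / total_rate \<Lambda> (card P) else 0)"
    (is "_ = ?w S")
proof -
  have nonneg: "0 \<le> ?w S" for S
    using total_rate_pos[OF assms(2)] by (auto intro!: divide_nonneg_pos lambda_rate_nonneg)
  have "(\<Sum>S | S \<subseteq> P \<and> 2 \<le> card S. ?w S)
      = (\<Sum>S | S \<subseteq> P \<and> 2 \<le> card S. lambda_rate \<Lambda> (card P) (card S) / total_rate \<Lambda> (card P))"
    by (intro sum.cong) auto
  also have "\<dots> = (\<Sum>k=2..card P. real (card P choose k) *
      (lambda_rate \<Lambda> (card P) k / total_rate \<Lambda> (card P)))"
    by (rule sum_subsets_by_card[OF assms(1)])
  also have "\<dots> = total_rate \<Lambda> (card P) / total_rate \<Lambda> (card P)"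
    unfolding total_rate_def sum_divide_distrib by simp
  also have "\<dots> = 1"
    using total_rate_pos[OF assms(2)] by simp
  finally have sum_one: "(\<Sum>S | S \<subseteq> P \<and> 2 \<le> card S. ?w S) = 1" .
  have "(\<integral>\<^sup>+S. ennreal (?w S) \<partial>count_space UNIV) = (\<Sum>S | S \<subseteq> P \<and> 2 \<le> card S. ennreal (?w S))"
    using assms by (intro nn_integral_count_space') auto
  also have "\<dots> = ennreal (\<Sum>S | S \<subseteq> P \<and> 2 \<le> card S. ?w S)"
    using nonneg by (intro sum_ennreal)
  also have "\<dots> = 1"
    using sum_one by simp
  finally have "(\<integral>\<^sup>+S. ennreal (?w S) \<partial>count_space UNIV) = 1" .
  then show ?thesis
    unfolding merge_choice_def using pmf_embed_pmf[of ?w] nonneg by simp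
qed

lemma set_pmf_merge_choice:
  assumes "finite P" "2 \<le> card P"
  shows "set_pmf (merge_choice \<Lambda> P) \<subseteq> {S. S \<subseteq> P \<and> 2 \<le> card S}"
  using assms by (auto simp: set_pmf_iff pmf_merge_choice split: if_splits)

lemma sum_pmf_merge_choice_by_card:
  fixes g :: "nat \<Rightarrow> real"
  assumes "finite P" "2 \<le> card P"
  shows "(\<Sum>S | S \<subseteq> P \<and> 2 \<le> card S. pmf (merge_choice \<Lambda> P) S * g (card S))
    = (\<Sum>k=2..card P. real (card P choose k) * lambda_rate \<Lambda> (card P) k / total_rate \<Lambda> (card P) * g k)"
proof -
  have "(\<Sum>S | S \<subseteq> P \<and> 2 \<le> card S. pmf (merge_choice \<Lambda> P) S * g (card S))
      = (\<Sum>S | S \<subseteq> P \<and> 2 \<le> card S.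
          lambda_rate \<Lambda> (card P) (card S) / total_rate \<Lambda> (card P) * g (card S))"
    using assms by (intro sum.cong) (auto simp: pmf_merge_choice)
  also have "\<dots> = (\<Sum>k=2..card P. real (card P choose k) *
      (lambda_rate \<Lambda> (card P) k / total_rate \<Lambda> (card P) * g k))"
    by (rule sum_subsets_by_card[OF assms(1)])
  finally show ?thesis
    by (simp add: mult.assoc)
qed

definition full_merger_weight :: "nat \<Rightarrow> real" where
  "full_merger_weight k = (if 2 \<le> k
    then 2 * lambda_rate \<Lambda> k k / (real (k - 1) * measure \<Lambda> {0..1}) else 0)"

definition weight_tail :: "nat \<Rightarrow> nat \<Rightarrow> real" where
  "weight_tail K b = (\<Sum>k\<in>{K<..b}. full_merger_weight k)"

lemma full_merger_weight_nonneg: "0 \<le> full_merger_weight k"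
  unfolding full_merger_weight_def using mass_pos
  by (auto intro!: divide_nonneg_nonneg mult_nonneg_nonneg lambda_rate_nonneg)

lemma full_merger_weight_antimono:
  assumes "2 \<le> j" "j \<le> b"
  shows "full_merger_weight b \<le> full_merger_weight j"
  unfolding full_merger_weight_def using assms mass_pos
  by (auto intro!: frac_le lambda_rate_diag_antimono lambda_rate_nonneg mult_right_mono)

lemma full_merger_weight_rate:
  assumes "2 \<le> b"
  shows "full_merger_weight b / 2 * ((real b - 1) * measure \<Lambda> {0..1}) = lambda_rate \<Lambda> b b"
  unfolding full_merger_weight_def using assms mass_pos by (simp add: of_nat_diff)

lemma weight_tail_nonneg: "0 \<le> weight_tail K b"
  unfolding weight_tail_def by (intro sum_nonneg full_merger_weight_nonneg)

lemma weight_tail_mono: "b \<le> b' \<Longrightarrow> weight_tail K b \<le> weight_tail K b'"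
  unfolding weight_tail_def by (intro sum_mono2 full_merger_weight_nonneg) auto

lemma weight_tail_one: "weight_tail K 1 = 0"
  unfolding weight_tail_def full_merger_weight_def by (intro sum.neutral) auto

lemma weight_tail_gain:
  assumes "2 * K < b" "1 \<le> m" "m \<le> b"
  shows "weight_tail K m + real (b - m) * full_merger_weight b / 2 \<le> weight_tail K b"
proof -
  let ?x = "max K m"
  have "{K<..b} = {K<..m} \<union> {?x<..b}"
    using assms by auto
  then have "weight_tail K b = weight_tail K m + (\<Sum>k\<in>{?x<..b}. full_merger_weight k)"
    unfolding weight_tail_def by (simp add: sum.union_disjoint)
  moreover have "real (b - ?x) * full_merger_weight b \<le> (\<Sum>k\<in>{?x<..b}. full_merger_weight k)"
    using sum_mono[of "{?x<..b}" "\<lambda>_. full_merger_weight b" full_merger_weight]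
      full_merger_weight_antimono assms by auto
  moreover have "real (b - m) * full_merger_weight b / 2 \<le> real (b - ?x) * full_merger_weight b"
  proof -
    have "real (b - m) \<le> 2 * real (b - ?x)"
      using assms by (simp add: max_def)
    from mult_right_mono[OF this full_merger_weight_nonneg[of b]] show ?thesis
      by (simp add: field_simps)
  qed
  ultimately show ?thesis by linarith
qed

text \<open>Bound on \<open>P(L > 2K)\<close> once the first merger from \<open>b\<close> blocks has involved \<open>k\<close> of
  them: if all merge then \<open>L = b\<close>, otherwise \<open>b - k + 1\<close> blocks remain.\<close>

definition tail_bound_after_merger :: "nat \<Rightarrow> nat \<Rightarrow> nat \<Rightarrow> real" where
  "tail_bound_after_merger K b k =
    (if k = b then (if 2 * K < b then 1 else 0) else weight_tail K (b - k + 1))"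

lemma tail_bound_after_merger_le:
  assumes "2 * K < b" "2 \<le> k" "k \<le> b"
  shows "tail_bound_after_merger K b k
    \<le> weight_tail K b - (real k - 1) * (full_merger_weight b / 2) + (if k = b then 1 else 0)"
proof -
  have "weight_tail K (b - k + 1) + real (b - (b - k + 1)) * full_merger_weight b / 2 \<le> weight_tail K b"
    using assms by (intro weight_tail_gain) auto
  moreover have "real (b - (b - k + 1)) = real k - 1"
    using assms by (simp add: of_nat_diff)
  ultimately show ?thesis
    using assms weight_tail_one by (auto simp: tail_bound_after_merger_def)
qed

lemma rate_weighted_tail_bound_le:
  assumes "2 \<le> b"
  shows "(\<Sum>k=2..b. real (b choose k) * lambda_rate \<Lambda> b k * tail_bound_after_merger K b k)
    \<le> total_rate \<Lambda> b * weight_tail K b"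
proof (cases "2 * K < b")
  case False
  then have "tail_bound_after_merger K b k \<le> weight_tail K b" if "k \<in> {2..b}" for k
    using that by (auto simp: tail_bound_after_merger_def intro: weight_tail_mono weight_tail_nonneg)
  then show ?thesis
    unfolding total_rate_def sum_distrib_right
    by (intro sum_mono mult_left_mono mult_nonneg_nonneg lambda_rate_nonneg) auto
next
  case True
  define r where "r k = real (b choose k) * lambda_rate \<Lambda> b k" for k
  define D where "D = (\<Sum>k=2..b. real (b choose k) * (real k - 1) * lambda_rate \<Lambda> b k)"
  define \<alpha> where "\<alpha> = full_merger_weight b / 2"
  have "(\<Sum>k=2..b. r k * tail_bound_after_merger K b k)
      \<le> (\<Sum>k=2..b. r k * (weight_tail K b - (real k - 1) * \<alpha> + (if k = b then 1 else 0)))"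
    using True unfolding \<alpha>_def r_def
    by (intro sum_mono mult_left_mono mult_nonneg_nonneg lambda_rate_nonneg tail_bound_after_merger_le) auto
  also have "\<dots> = (\<Sum>k=2..b. r k * weight_tail K b - \<alpha> * (real (b choose k) * (real k - 1) * lambda_rate \<Lambda> b k)
      + (if k = b then r k else 0))"
    by (intro sum.cong refl) (simp add: r_def algebra_simps)
  also have "\<dots> = total_rate \<Lambda> b * weight_tail K b - \<alpha> * D + r b"
    using assms unfolding total_rate_def D_def r_def
    by (simp add: sum.distrib sum_subtractf sum_distrib_left sum_distrib_right)
  also have "r b \<le> \<alpha> * D"
    using mult_left_mono[OF block_loss_rate_ge[OF assms], of \<alpha>]
      full_merger_weight_rate[OF assms] full_merger_weight_nonneg
    by (simp add: r_def \<alpha>_def D_def)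
  finally show ?thesis
    by (simp add: r_def)
qed

lemma expected_tail_bound_after_merger_le:
  assumes "2 \<le> b"
  shows "(\<Sum>k=2..b. real (b choose k) * lambda_rate \<Lambda> b k / total_rate \<Lambda> b
      * tail_bound_after_merger K b k) \<le> weight_tail K b"
  using rate_weighted_tail_bound_le[OF assms, of K] total_rate_pos[OF assms]
  by (simp add: sum_divide_distrib[symmetric] pos_divide_le_eq mult.commute)

lemma prob_last_merger_aux_Suc:
  assumes "finite P" "2 \<le> card P"
  shows "measure_pmf.prob (last_merger_aux \<Lambda> (Suc f) P) X
    = (\<Sum>S | S \<subseteq> P \<and> 2 \<le> card S. pmf (merge_choice \<Lambda> P) S * measure_pmf.prob
        (if S = P then return_pmf (card P) else last_merger_aux \<Lambda> f ((P - S) \<union> {\<Union>S})) X)"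
  using assms
  by (simp del: last_merger_aux.simps add: last_merger_aux.simps(2)
      measure_bind_pmf_finite[OF _ set_pmf_merge_choice])

lemma last_merger_tail_le:
  assumes "1 \<le> K" "finite P" "card P \<le> f"
  shows "measure_pmf.prob (last_merger_aux \<Lambda> f P) {2 * K<..} \<le> weight_tail K (card P)"
  using assms(2,3)
proof (induction f arbitrary: P)
  case 0
  then show ?case by (simp add: weight_tail_nonneg)
next
  case (Suc f)
  show ?case
  proof (cases "card P \<le> 1")
    case True
    then show ?thesis using assms(1) by (auto simp: indicator_def weight_tail_nonneg)
  next
    case False
    let ?b = "card P" and ?A = "{S. S \<subseteq> P \<and> 2 \<le> card S}"
    let ?N = "\<lambda>S. if S = P then return_pmf ?b else last_merger_aux \<Lambda> f ((P - S) \<union> {\<Union>S})"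
    have b: "2 \<le> ?b" using False by simp
    have after_merger: "measure_pmf.prob (?N S) {2 * K<..} \<le> tail_bound_after_merger K ?b (card S)"
      if S: "S \<in> ?A" for S
    proof (cases "S = P")
      case True
      then show ?thesis by (simp add: tail_bound_after_merger_def indicator_def)
    next
      case False
      let ?P' = "(P - S) \<union> {\<Union>S}"
      have "card S < ?b"
        using S False Suc.prems(1) by (auto intro: psubset_card_mono)
      have card_P': "card ?P' \<le> ?b - card S + 1"
        using S Suc.prems(1) by (intro card_merge_blocks_le) auto
      have "measure_pmf.prob (last_merger_aux \<Lambda> f ?P') {2 * K<..} \<le> weight_tail K (card ?P')"
        using S Suc.prems card_P' \<open>card S < ?b\<close> by (intro Suc.IH) auto
      also have "\<dots> \<le> weight_tail K (?b - card S + 1)"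
        using card_P' by (rule weight_tail_mono)
      finally show ?thesis
        using False \<open>card S < ?b\<close> by (simp add: tail_bound_after_merger_def)
    qed
    have "measure_pmf.prob (last_merger_aux \<Lambda> (Suc f) P) {2 * K<..}
        = (\<Sum>S\<in>?A. pmf (merge_choice \<Lambda> P) S * measure_pmf.prob (?N S) {2 * K<..})"
      by (rule prob_last_merger_aux_Suc[OF Suc.prems(1) b])
    also have "\<dots> \<le> (\<Sum>S\<in>?A. pmf (merge_choice \<Lambda> P) S * tail_bound_after_merger K ?b (card S))"
      by (intro sum_mono mult_left_mono after_merger) auto
    also have "\<dots> = (\<Sum>k=2..?b. real (?b choose k) * lambda_rate \<Lambda> ?b k / total_rate \<Lambda> ?b
        * tail_bound_after_merger K ?b k)"
      by (rule sum_pmf_merge_choice_by_card[OF Suc.prems(1) b])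
    also have "\<dots> \<le> weight_tail K ?b"
      by (rule expected_tail_bound_after_merger_le[OF b])
    finally show ?thesis .
  qed
qed

lemma sum_full_merger_weight_eq_integral:
  "(\<Sum>j\<le>n. full_merger_weight (j + 2))
    = 2 / measure \<Lambda> {0..1} * (\<integral>p. indicator {0..1} p * (\<Sum>j\<le>n. p ^ j / real (Suc j)) \<partial>\<Lambda>)"
proof -
  have integrable: "integrable \<Lambda> (\<lambda>p. indicator {0..1} p * (p ^ j / real (Suc j)))" for j
  proof (rule integrable_indicator_bounded[where B = 1])
    show "(\<lambda>p::real. p ^ j / real (Suc j)) \<in> borel_measurable borel"
      by measurable
    fix p :: real
    assume "p \<in> {0..1}"
    then have "0 \<le> p ^ j" "p ^ j \<le> 1"
      by (auto intro: power_le_one)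
    then show "\<bar>p ^ j / real (Suc j)\<bar> \<le> 1"
      by (simp add: abs_divide divide_le_eq)
  qed
  have "full_merger_weight (j + 2)
      = 2 / measure \<Lambda> {0..1} * (\<integral>p. indicator {0..1} p * (p ^ j / real (Suc j)) \<partial>\<Lambda>)" for j
    unfolding full_merger_weight_def lambda_rate_eq_integral times_divide_eq_right
    by (simp add: field_simps)
  then have "(\<Sum>j\<le>n. full_merger_weight (j + 2))
      = 2 / measure \<Lambda> {0..1} * (\<Sum>j\<le>n. \<integral>p. indicator {0..1} p * (p ^ j / real (Suc j)) \<partial>\<Lambda>)"
    by (simp add: sum_distrib_left)
  also have "\<dots> = 2 / measure \<Lambda> {0..1}
      * (\<integral>p. (\<Sum>j\<le>n. indicator {0..1} p * (p ^ j / real (Suc j))) \<partial>\<Lambda>)"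
    by (simp only: Bochner_Integration.integral_sum integrable)
  also have "\<dots> = 2 / measure \<Lambda> {0..1} * (\<integral>p. indicator {0..1} p * (\<Sum>j\<le>n. p ^ j / real (Suc j)) \<partial>\<Lambda>)"
    by (simp add: sum_distrib_left)
  finally show ?thesis .
qed

lemma summable_full_merger_weight:
  assumes "(\<integral>\<^sup>+ p\<in>{0..1}. (if p < 1 then ennreal \<bar>ln (1 - p)\<bar> else \<infinity>) \<partial>\<Lambda>) < \<infinity>"
  shows "summable full_merger_weight"
proof -
  define H where "H p = (1 + (if p < 1 then ennreal \<bar>ln (1 - p)\<bar> else \<infinity>)) * indicator {0..1} p"
    for p :: real
  have H_finite: "(\<integral>\<^sup>+p. H p \<partial>\<Lambda>) < \<infinity>"
  proof -
    have [measurable]: "(\<lambda>p. (if p < 1 then ennreal \<bar>ln (1 - p)\<bar> else \<infinity>) * indicator {0..1} p)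
        \<in> borel_measurable \<Lambda>" "(\<lambda>p. indicator {0..1} p :: ennreal) \<in> borel_measurable \<Lambda>"
      unfolding measurable_cong_sets[OF sets_eq_borel refl] by measurable
    have "(\<integral>\<^sup>+p. H p \<partial>\<Lambda>) = emeasure \<Lambda> {0..1}
        + (\<integral>\<^sup>+p. (if p < 1 then ennreal \<bar>ln (1 - p)\<bar> else \<infinity>) * indicator {0..1} p \<partial>\<Lambda>)"
      unfolding H_def distrib_right using sets_eq_borel by (subst nn_integral_add) auto
    then show ?thesis
      using assms emeasure_finite by (simp add: less_top[symmetric])
  qed
  have "summable (\<lambda>j. full_merger_weight (j + 2))"
  proof (rule bounded_imp_summable)
    show "0 \<le> full_merger_weight (j + 2)" for j
      by (rule full_merger_weight_nonneg)
    fix n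
    let ?q = "\<lambda>p. \<Sum>j\<le>n. p ^ j / real (Suc j)"
    have "(\<Sum>j\<le>n. full_merger_weight (j + 2))
        = 2 / measure \<Lambda> {0..1} * (\<integral>p. indicator {0..1} p * ?q p \<partial>\<Lambda>)"
      by (rule sum_full_merger_weight_eq_integral)
    also have "(\<integral>p. indicator {0..1} p * ?q p \<partial>\<Lambda>) \<le> enn2real (\<integral>\<^sup>+p. H p \<partial>\<Lambda>)"
    proof (rule integral_real_bounded)
      have "ennreal (indicator {0..1} p * ?q p) \<le> H p" for p
      proof (cases "p \<in> {0..1} \<and> p < 1")
        case True
        then have "ennreal (?q p) \<le> ennreal (1 + \<bar>ln (1 - p)\<bar>)"
          using sum_power_div_Suc_le[of p n] by (intro ennreal_leI) auto
        also have "\<dots> = 1 + ennreal \<bar>ln (1 - p)\<bar>"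
          by (simp add: ennreal_plus)
        finally show ?thesis
          using True by (simp add: H_def)
      qed (auto simp: H_def)
      then show "(\<integral>\<^sup>+p. ennreal (indicator {0..1} p * ?q p) \<partial>\<Lambda>) \<le> ennreal (enn2real (\<integral>\<^sup>+p. H p \<partial>\<Lambda>))"
        using H_finite by (simp add: nn_integral_mono)
    qed simp
    finally show "(\<Sum>j\<le>n. full_merger_weight (j + 2)) \<le> 2 / measure \<Lambda> {0..1} * enn2real (\<integral>\<^sup>+p. H p \<partial>\<Lambda>)"
      using mass_pos by (simp add: divide_right_mono)
  qed
  then show ?thesis
    by (rule summable_iff_shift[THEN iffD1])
qed

lemma L_law_tail_le:
  assumes "1 \<le> K"
  shows "measure_pmf.prob (L_law \<Lambda> n) {2 * K<..} \<le> weight_tail K n"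
proof -
  have "{{i} | i. i \<in> {1..n}} = (\<lambda>i. {i}) ` {1..n}"
    by auto
  then have singletons: "finite {{i} | i. i \<in> {1..n}}" "card {{i} | i. i \<in> {1..n}} \<le> n"
    using card_image_le[of "{1..n}" "\<lambda>i. {i}"] by simp_all
  have "measure_pmf.prob (L_law \<Lambda> n) {2 * K<..} \<le> weight_tail K (card {{i} | i. i \<in> {1..n}})"
    unfolding L_law_def by (rule last_merger_tail_le[OF assms singletons])
  also have "\<dots> \<le> weight_tail K n"
    using singletons(2) by (rule weight_tail_mono)
  finally show ?thesis .
qed

lemma weight_tail_eventually_small:
  assumes "summable full_merger_weight" "0 < \<epsilon>"
  obtains K where "1 \<le> K" "\<And>b. weight_tail K b \<le> \<epsilon>"
proof -
  obtain N where N: "\<And>m n. N \<le> m \<Longrightarrow> norm (\<Sum>k=m..n. full_merger_weight k) < \<epsilon>"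
    using summable_partial_sum_bound[OF assms] by blast
  have "weight_tail (Suc N) b \<le> \<epsilon>" for b
  proof -
    have "weight_tail (Suc N) b = (\<Sum>k=Suc (Suc N)..b. full_merger_weight k)"
      unfolding weight_tail_def atLeastSucAtMost_greaterThanAtMost ..
    also have "\<dots> < \<epsilon>"
      using N[of "Suc (Suc N)" b] by simp
    finally show ?thesis by simp
  qed
  then show ?thesis
    using that[of "Suc N"] by simp
qed

end

lemma Lambda_coalescentI:
  assumes "finite_measure \<Lambda>" "sets \<Lambda> = sets borel" "emeasure \<Lambda> {0..1} \<noteq> 0"
  shows "Lambda_coalescent \<Lambda>"
proof -
  have "measure \<Lambda> {0..1} \<noteq> 0"
    using assms(3) by (auto simp: finite_measure.emeasure_eq_measure[OF assms(1)])
  then have "0 < measure \<Lambda> {0..1}"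
    using measure_nonneg[of \<Lambda> "{0..1}"] by (simp add: order_less_le)
  with assms(1,2) show ?thesis
    by (simp add: Lambda_coalescent_def Lambda_coalescent_axioms_def
        finite_borel_measure_def finite_borel_measure_axioms_def)
qed

theorem theorem1:
  fixes \<Lambda> :: "real measure"
  assumes "finite_measure \<Lambda>"
    and "sets \<Lambda> = sets borel"
    and "emeasure \<Lambda> (UNIV - {0..1}) = 0"
    and "emeasure \<Lambda> {0..1} \<noteq> 0"
    and "(\<integral>\<^sup>+ p\<in>{0..1}. (if p < 1 then ennreal \<bar>ln (1 - p)\<bar> else \<infinity>) \<partial>\<Lambda>) < \<infinity>"
  shows "\<forall>\<epsilon>>0. \<exists>K::nat. \<forall>n\<ge>1. measure_pmf.prob (L_law \<Lambda> n) {K<..} \<le> \<epsilon>"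
proof (intro allI impI)
  fix \<epsilon> :: real
  assume "0 < \<epsilon>"
  interpret Lambda_coalescent \<Lambda>
    using assms(1,2,4) by (rule Lambda_coalescentI)
  obtain K where "1 \<le> K" and small: "\<And>b. weight_tail K b \<le> \<epsilon>"
    using weight_tail_eventually_small[OF summable_full_merger_weight[OF assms(5)] \<open>0 < \<epsilon>\<close>]
    by blast
  have "measure_pmf.prob (L_law \<Lambda> n) {2 * K<..} \<le> \<epsilon>" for n
    using L_law_tail_le[OF \<open>1 \<le> K\<close>, of n] small[of n] by linarith
  then show "\<exists>K::nat. \<forall>n\<ge>1. measure_pmf.prob (L_law \<Lambda> n) {K<..} \<le> \<epsilon>"
    by blast
qed

end
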